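(* Let $c>0$ be fixed, let $k\in\mathbb{N}$, and let $\phi_k(x)=(x^2+c^2)^{k-1/2}$ be the $k$-th order multiquadric. Let $\{x_j\}_{j\in\mathbb{Z}}\subset\mathbb{R}$ be a scattered sequence. Then for every $\epsilon>0$ and every continuous function $f:[a,b]\to\mathbb{R}$ there exist $N\in\mathbb{N}$ and real coefficients $a_1,\dots,a_N$ such that \[ \sup_{x\in[a,b]}\left|f(x)-\sum_{j=1}^{N}a_j\phi_k(x-x_j)\right|<\epsilon . \]
   Context: A sequence $\mathcal{X}$ of real numbers is $\delta$-separated if $\inf_{x,y\in\mathcal{X},\,x\neq y}|x-y|=\delta>0$. A sequence $\{x_j\}_{j\in\mathbb{Z}}\subset\mathbb{R}$ is called scattered if it is $\delta$-separated for some $\delta>0$ and $\lim_{j\to\pm\infty}x_j=\pm\infty$. *)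

theory Defs
  imports "HOL-Analysis.Analysis"
begin

definition multiquadric :: "real \<Rightarrow> nat \<Rightarrow> real \<Rightarrow> real" where
  "multiquadric c k x = (x\<^sup>2 + c\<^sup>2) powr (real k - 1/2)"

definition delta_separated :: "real set \<Rightarrow> real \<Rightarrow> bool" where
  "delta_separated X \<delta> \<longleftrightarrow>
     \<delta> > 0 \<and> Inf {\<bar>x - y\<bar> | x y. x \<in> X \<and> y \<in> X \<and> x \<noteq> y} = \<delta>"

definition scattered :: "(int \<Rightarrow> real) \<Rightarrow> bool" where
  "scattered xs \<longleftrightarrow> (\<exists>\<delta>>0. delta_separated (range xs) \<delta>)
     \<and> filterlim xs at_top at_top \<and> filterlim xs at_bot at_bot"

end

theory Submission
  imports Defs
begin

text \<open>
  By the Weierstrass theorem it suffices to approximate each monomial x^n uniformly on [a, b]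
  by combinations of the shifts \<phi>(x - x_j), \<phi> = multiquadric c k, which we do by induction on n. Since
  x_j \<rightarrow> \<infinity>, the shift t = x_j may be taken as large as we like. Writing
  \<phi>(x - t) = (u^2 + c^2) powr (k - 1/2) with u = t - x and expanding binomially, first in c^2/u^2
  and then each power (t - x) powr e in x/t, gives
  \<phi>(x - t) = A_0(t) + A_1(t) x + ... + A_n(t) x^n + O(t powr (E - n - 1)) uniformly for bounded x,
  where A_n(t) ~ \<kappa> t powr (E - n) with \<kappa> \<noteq> 0. Here E = 2k - 1 if n < 2k; otherwise the
  polynomial part (t - x)^(2k - 1) of the expansion does not contribute to x^n, and E = -1 comes
  from the next term. Hence (\<phi>(x - t) - sum_{p<n} A_p(t) x^p) / A_n(t) \<rightarrow> x^n uniformly.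
\<close>

section \<open>Uniform approximation by combinations of a sequence of functions\<close>

definition uniformly_approximable :: "real set \<Rightarrow> (nat \<Rightarrow> real \<Rightarrow> real) \<Rightarrow> (real \<Rightarrow> real) \<Rightarrow> bool"
  where "uniformly_approximable S F g \<longleftrightarrow>
    (\<forall>\<epsilon>>0. \<exists>(N::nat) coef. \<forall>x\<in>S. \<bar>g x - (\<Sum>j=1..N. coef j * F j x)\<bar> < \<epsilon>)"

lemma uniformly_approximable_basis:
  assumes "j \<ge> 1"
  shows "uniformly_approximable S F (F j)"
  unfolding uniformly_approximable_def
proof (intro allI impI)
  fix \<epsilon> :: real assume "\<epsilon> > 0"
  have "(\<Sum>i=1..j. (if i = j then 1 else 0) * F i x) = F j x" for x
  proof -
    have "(\<Sum>i=1..j. (if i = j then 1 else 0) * F i x) = (\<Sum>i=1..j. if i = j then F j x else 0)"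
      by (rule sum.cong) auto
    also have "\<dots> = F j x"
      using assms by simp
    finally show ?thesis .
  qed
  with \<open>\<epsilon> > 0\<close> show "\<exists>N coef. \<forall>x\<in>S. \<bar>F j x - (\<Sum>i=1..N. coef i * F i x)\<bar> < \<epsilon>"
    by (intro exI[of _ j] exI[of _ "\<lambda>i. if i = j then 1 else 0"]) simp
qed

lemma uniformly_approximable_zero: "uniformly_approximable S F (\<lambda>x. 0)"
  unfolding uniformly_approximable_def by (intro allI impI exI[of _ 0]) auto

lemma uniformly_approximable_limit:
  assumes "\<And>\<epsilon>. \<epsilon> > 0 \<Longrightarrow> \<exists>g. uniformly_approximable S F g \<and> (\<forall>x\<in>S. \<bar>f x - g x\<bar> < \<epsilon>)"
  shows "uniformly_approximable S F f"
  unfolding uniformly_approximable_def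
proof (intro allI impI)
  fix \<epsilon> :: real assume "\<epsilon> > 0"
  then obtain g where g: "uniformly_approximable S F g" "\<forall>x\<in>S. \<bar>f x - g x\<bar> < \<epsilon>/2"
    using assms[of "\<epsilon>/2"] by auto
  then obtain N coef where N: "\<forall>x\<in>S. \<bar>g x - (\<Sum>j=1..N. coef j * F j x)\<bar> < \<epsilon>/2"
    using \<open>\<epsilon> > 0\<close> unfolding uniformly_approximable_def by (meson half_gt_zero)
  have "\<bar>f x - (\<Sum>j=1..N. coef j * F j x)\<bar> < \<epsilon>" if "x \<in> S" for x
    using bspec[OF g(2) that] bspec[OF N that] by arith
  then show "\<exists>N coef. \<forall>x\<in>S. \<bar>f x - (\<Sum>j=1..N. coef j * F j x)\<bar> < \<epsilon>" by blast
qed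

lemma uniformly_approximable_add:
  assumes f: "uniformly_approximable S F f" and g: "uniformly_approximable S F g"
  shows "uniformly_approximable S F (\<lambda>x. f x + g x)"
  unfolding uniformly_approximable_def
proof (intro allI impI)
  fix \<epsilon> :: real assume "\<epsilon> > 0"
  obtain N1 c1 where 1: "\<forall>x\<in>S. \<bar>f x - (\<Sum>j=1..N1. c1 j * F j x)\<bar> < \<epsilon>/2"
    using f \<open>\<epsilon> > 0\<close> unfolding uniformly_approximable_def by (meson half_gt_zero)
  obtain N2 c2 where 2: "\<forall>x\<in>S. \<bar>g x - (\<Sum>j=1..N2. c2 j * F j x)\<bar> < \<epsilon>/2"
    using g \<open>\<epsilon> > 0\<close> unfolding uniformly_approximable_def by (meson half_gt_zero)
  define N where "N = max N1 N2"
  define coef where "coef j = (if j \<le> N1 then c1 j else 0) + (if j \<le> N2 then c2 j else 0)" for j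
  have padding: "(\<Sum>j=1..N. (if j \<le> M then d j else 0) * F j x) = (\<Sum>j=1..M. d j * F j x)"
    if "M \<le> N" for M d x
    by (rule sum.mono_neutral_cong_right) (use that in auto)
  have split: "(\<Sum>j=1..N. coef j * F j x) = (\<Sum>j=1..N1. c1 j * F j x) + (\<Sum>j=1..N2. c2 j * F j x)"
    for x
    using padding[of N1 c1] padding[of N2 c2] unfolding coef_def distrib_right sum.distrib N_def
    by simp
  have "\<bar>f x + g x - (\<Sum>j=1..N. coef j * F j x)\<bar> < \<epsilon>" if "x \<in> S" for x
    using bspec[OF 1 that] bspec[OF 2 that] split[of x] by arith
  then show "\<exists>N coef. \<forall>x\<in>S. \<bar>f x + g x - (\<Sum>j=1..N. coef j * F j x)\<bar> < \<epsilon>" by blast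
qed

lemma uniformly_approximable_cmult:
  assumes f: "uniformly_approximable S F f"
  shows "uniformly_approximable S F (\<lambda>x. r * f x)"
proof (cases "r = 0")
  case True
  then show ?thesis using uniformly_approximable_zero by simp
next
  case False
  show ?thesis unfolding uniformly_approximable_def
  proof (intro allI impI)
    fix \<epsilon> :: real assume "\<epsilon> > 0"
    then obtain N coef where N: "\<forall>x\<in>S. \<bar>f x - (\<Sum>j=1..N. coef j * F j x)\<bar> < \<epsilon> / \<bar>r\<bar>"
      using f False unfolding uniformly_approximable_def by (meson divide_pos_pos zero_less_abs_iff)
    have "\<bar>r * f x - (\<Sum>j=1..N. (r * coef j) * F j x)\<bar> = \<bar>r\<bar> * \<bar>f x - (\<Sum>j=1..N. coef j * F j x)\<bar>" for x
      by (simp add: sum_distrib_left abs_mult[symmetric] right_diff_distrib mult.assoc)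
    with N False have "\<forall>x\<in>S. \<bar>r * f x - (\<Sum>j=1..N. (r * coef j) * F j x)\<bar> < \<epsilon>"
      by (simp add: less_divide_eq mult.commute)
    then show "\<exists>N coef. \<forall>x\<in>S. \<bar>r * f x - (\<Sum>j=1..N. coef j * F j x)\<bar> < \<epsilon>"
      by (intro exI[of _ N] exI[of _ "\<lambda>j. r * coef j"])
  qed
qed

lemma uniformly_approximable_sum:
  assumes "\<And>i. i \<in> I \<Longrightarrow> uniformly_approximable S F (G i)"
  shows "uniformly_approximable S F (\<lambda>x. \<Sum>i\<in>I. G i x)"
proof (cases "finite I")
  case True
  then show ?thesis using assms
    by (induction I rule: finite_induct) (auto intro: uniformly_approximable_zero uniformly_approximable_add)
qed (simp add: uniformly_approximable_zero)

lemma uniformly_approximable_continuous: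
  assumes monomials: "\<And>n. uniformly_approximable {a..b} F (\<lambda>x. x ^ n)"
    and f: "continuous_on {a..b} f"
  shows "uniformly_approximable {a..b} F f"
proof (rule uniformly_approximable_limit)
  fix \<epsilon> :: real assume "\<epsilon> > 0"
  obtain g where g: "real_polynomial_function g" "\<And>x. x \<in> {a..b} \<Longrightarrow> \<bar>f x - g x\<bar> < \<epsilon>"
    using Stone_Weierstrass_real_polynomial_function[OF compact_Icc f \<open>\<epsilon> > 0\<close>] by blast
  obtain coef n where "g = (\<lambda>x. \<Sum>i\<le>n. coef i * x ^ i)"
    using g(1) real_polynomial_function_iff_sum by blast
  moreover have "uniformly_approximable {a..b} F (\<lambda>x. \<Sum>i\<le>n. coef i * x ^ i)"
    by (intro uniformly_approximable_sum uniformly_approximable_cmult monomials)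
  ultimately show "\<exists>g. uniformly_approximable {a..b} F g \<and> (\<forall>x\<in>{a..b}. \<bar>f x - g x\<bar> < \<epsilon>)"
    using g(2) by blast
qed

lemma uniformly_approximable_monomial_step:
  assumes lower: "\<And>p. p < n \<Longrightarrow> uniformly_approximable S F (\<lambda>x. x ^ p)"
    and expansion: "\<And>\<epsilon>. \<epsilon> > 0 \<Longrightarrow> \<exists>j\<ge>1. \<exists>A. A n \<noteq> 0 \<and>
        (\<forall>x\<in>S. \<bar>F j x - (\<Sum>p\<le>n. A p * x ^ p)\<bar> \<le> \<epsilon> * \<bar>A n\<bar>)"
  shows "uniformly_approximable S F (\<lambda>x. x ^ n)"
proof (rule uniformly_approximable_limit)
  fix \<epsilon> :: real assume "\<epsilon> > 0"
  then obtain j A where j: "j \<ge> 1" and An: "A n \<noteq> 0"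
    and close: "\<forall>x\<in>S. \<bar>F j x - (\<Sum>p\<le>n. A p * x ^ p)\<bar> \<le> \<epsilon>/2 * \<bar>A n\<bar>"
    using expansion[of "\<epsilon>/2"] by auto
  define g where "g x = (F j x + (-1) * (\<Sum>p<n. A p * x ^ p)) / A n" for x
  have "uniformly_approximable S F g"
    unfolding g_def divide_inverse mult.commute[of _ "inverse (A n)"]
    by (intro uniformly_approximable_cmult uniformly_approximable_add uniformly_approximable_basis[OF j]
        uniformly_approximable_sum lower) auto
  moreover have "\<bar>x ^ n - g x\<bar> < \<epsilon>" if "x \<in> S" for x
  proof -
    have "(\<Sum>p\<le>n. A p * x ^ p) = (\<Sum>p<n. A p * x ^ p) + A n * x ^ n"
      by (simp add: lessThan_Suc_atMost[symmetric])
    then have "x ^ n - g x = - (F j x - (\<Sum>p\<le>n. A p * x ^ p)) / A n"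
      using An by (simp add: g_def field_simps)
    then have "\<bar>x ^ n - g x\<bar> = \<bar>F j x - (\<Sum>p\<le>n. A p * x ^ p)\<bar> / \<bar>A n\<bar>"
      by (simp add: abs_div abs_minus_commute)
    also have "\<dots> \<le> \<epsilon>/2"
      using close that An by (simp add: divide_le_eq)
    finally show ?thesis using \<open>\<epsilon> > 0\<close> by simp
  qed
  ultimately show "\<exists>g. uniformly_approximable S F g \<and> (\<forall>x\<in>S. \<bar>x ^ n - g x\<bar> < \<epsilon>)" by blast
qed

section \<open>Binomial expansions with remainder\<close>

lemma one_plus_powr_le_two_powr_abs:
  fixes r t :: real
  assumes "\<bar>t\<bar> \<le> 1/2"
  shows "(1 + t) powr r \<le> 2 powr \<bar>r\<bar>"
proof (cases "r \<ge> 0")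
  case True
  have "(1 + t) powr r \<le> 2 powr r" by (rule powr_mono2) (use True assms in auto)
  then show ?thesis using True by simp
next
  case False
  have "(1 + t) powr r \<le> (1/2) powr r" by (rule powr_mono2') (use False assms in auto)
  also have "(1/2::real) powr r = 2 powr (-r)" by (simp add: powr_minus_divide powr_divide)
  finally show ?thesis using False by simp
qed

lemma DERIV_gbinomial_one_plus_powr:
  fixes e t :: real
  assumes "1 + t > 0"
  shows "((\<lambda>t. (e gchoose p) * fact p * (1 + t) powr (e - p)) has_real_derivative
          (e gchoose Suc p) * fact (Suc p) * (1 + t) powr (e - Suc p)) (at t)"
proof -
  have "e * (e gchoose p) = p * (e gchoose p) + Suc p * (e gchoose Suc p)"
    by (rule gbinomial_mult_1)
  then have coeff: "(e gchoose p) * fact p * (e - p) = (e gchoose Suc p) * fact (Suc p)"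
    by (simp add: algebra_simps)
  have "((\<lambda>t. (1 + t) powr (e - p)) has_real_derivative (e - p) * (1 + t) powr (e - p - 1)) (at t)"
    using DERIV_fun_powr[of "\<lambda>t. 1 + t" 1 t "e - p"] assms
    by (simp add: DERIV_add_const)
  moreover have "(e gchoose p) * fact p * ((e - p) * (1 + t) powr (e - p - 1))
      = (e gchoose Suc p) * fact (Suc p) * (1 + t) powr (e - Suc p)"
    unfolding coeff[symmetric] by (simp add: algebra_simps)
  ultimately show ?thesis
    using DERIV_cmult[of "\<lambda>t. (1 + t) powr (e - p)" _ t UNIV "(e gchoose p) * fact p"] by metis
qed

lemma one_plus_powr_taylor_bound:
  fixes e :: real
  shows "\<exists>C\<ge>0. \<forall>v. \<bar>v\<bar> \<le> 1/2 \<longrightarrow>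
     \<bar>(1 + v) powr e - (\<Sum>p\<le>N. (e gchoose p) * v ^ p)\<bar> \<le> C * \<bar>v\<bar> ^ Suc N"
proof (intro exI conjI allI impI)
  fix v :: real assume v: "\<bar>v\<bar> \<le> 1/2"
  define d where "d p t = (e gchoose p) * fact p * (1 + t) powr (e - p)" for p and t :: real
  have "\<forall>p t. p < Suc N \<and> \<bar>t\<bar> \<le> \<bar>v\<bar> \<longrightarrow> (d p has_real_derivative d (Suc p) t) (at t)"
  proof (intro allI impI)
    fix p t assume "p < Suc N \<and> \<bar>t\<bar> \<le> \<bar>v\<bar>"
    then have "1 + t > 0" using v by linarith
    then show "(d p has_real_derivative d (Suc p) t) (at t)"
      unfolding d_def by (rule DERIV_gbinomial_one_plus_powr)
  qed
  from Maclaurin_bi_le[of d "\<lambda>t. (1 + t) powr e", OF _ this]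
  obtain t where t: "\<bar>t\<bar> \<le> \<bar>v\<bar>"
    and eq: "(1 + v) powr e = (\<Sum>p<Suc N. d p 0 / fact p * v ^ p) + d (Suc N) t / fact (Suc N) * v ^ Suc N"
    by (auto simp: d_def fun_eq_iff)
  have "(\<Sum>p<Suc N. d p 0 / fact p * v ^ p) = (\<Sum>p\<le>N. (e gchoose p) * v ^ p)"
    by (rule sum.cong) (auto simp: d_def lessThan_Suc_atMost)
  with eq have "\<bar>(1 + v) powr e - (\<Sum>p\<le>N. (e gchoose p) * v ^ p)\<bar>
      = \<bar>e gchoose Suc N\<bar> * (1 + t) powr (e - Suc N) * \<bar>v\<bar> ^ Suc N"
    by (simp add: d_def abs_mult power_abs)
  also have "\<dots> \<le> \<bar>e gchoose Suc N\<bar> * 2 powr \<bar>e - Suc N\<bar> * \<bar>v\<bar> ^ Suc N"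
    using t v by (intro mult_right_mono mult_left_mono one_plus_powr_le_two_powr_abs) auto
  finally show "\<bar>(1 + v) powr e - (\<Sum>p\<le>N. (e gchoose p) * v ^ p)\<bar>
      \<le> \<bar>e gchoose Suc N\<bar> * 2 powr \<bar>e - Suc N\<bar> * \<bar>v\<bar> ^ Suc N" .
qed simp

lemma one_plus_powr_of_nat_eq_sum:
  fixes v :: real
  assumes "d \<le> N" "1 + v > 0"
  shows "(1 + v) powr d = (\<Sum>p\<le>N. (real d gchoose p) * v ^ p)"
proof -
  have "(1 + v) powr d = (v + 1) ^ d" using assms by (simp add: powr_realpow add.commute)
  also have "\<dots> = (\<Sum>p\<le>d. real (d choose p) * v ^ p)" by (simp add: binomial_ring)
  also have "\<dots> = (\<Sum>p\<le>N. real (d choose p) * v ^ p)"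
    by (rule sum.mono_neutral_left) (use assms in auto)
  finally show ?thesis by (simp add: binomial_gbinomial)
qed

lemma powr_mult_one_plus_taylor_bound:
  fixes e :: real
  shows "\<exists>C\<ge>0. \<forall>a v. a > 0 \<longrightarrow> \<bar>v\<bar> \<le> 1/2 \<longrightarrow>
     \<bar>(a * (1 + v)) powr e - (\<Sum>p\<le>N. (e gchoose p) * (a powr e * v ^ p))\<bar> \<le> C * a powr e * \<bar>v\<bar> ^ Suc N"
proof -
  obtain C where "C \<ge> 0" and C: "\<And>v. \<bar>v\<bar> \<le> 1/2 \<Longrightarrow>
      \<bar>(1 + v) powr e - (\<Sum>p\<le>N. (e gchoose p) * v ^ p)\<bar> \<le> C * \<bar>v\<bar> ^ Suc N"
    using one_plus_powr_taylor_bound by blast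
  have "\<bar>(a * (1 + v)) powr e - (\<Sum>p\<le>N. (e gchoose p) * (a powr e * v ^ p))\<bar> \<le> C * a powr e * \<bar>v\<bar> ^ Suc N"
    if "a > 0" "\<bar>v\<bar> \<le> 1/2" for a v
  proof -
    have "(a * (1 + v)) powr e - (\<Sum>p\<le>N. (e gchoose p) * (a powr e * v ^ p))
        = a powr e * ((1 + v) powr e - (\<Sum>p\<le>N. (e gchoose p) * v ^ p))"
      using that by (simp add: powr_mult right_diff_distrib sum_distrib_left mult_ac)
    then show ?thesis
      using mult_left_mono[OF C[OF that(2)], of "a powr e"] by (simp add: abs_mult mult_ac)
  qed
  with \<open>C \<ge> 0\<close> show ?thesis by blast
qed

lemma powr_mult_divide_power:
  fixes t y e :: real
  assumes "t > 0"
  shows "t powr e * (y / t) ^ p = y ^ p * t powr (e - p)"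
  using assms by (simp add: powr_diff powr_realpow power_divide)

lemma diff_powr_expansion:
  fixes e B :: real
  assumes "B \<ge> 0"
  shows "\<exists>C\<ge>0. \<forall>t x. 2 * B \<le> t \<longrightarrow> t > 0 \<longrightarrow> \<bar>x\<bar> \<le> B \<longrightarrow>
     \<bar>(t - x) powr e - (\<Sum>p\<le>n. (e gchoose p) * (- x) ^ p * t powr (e - p))\<bar> \<le> C * t powr (e - n - 1)"
proof -
  obtain C where "C \<ge> 0" and C: "\<And>a v. a > 0 \<Longrightarrow> \<bar>v\<bar> \<le> 1/2 \<Longrightarrow>
      \<bar>(a * (1 + v)) powr e - (\<Sum>p\<le>n. (e gchoose p) * (a powr e * v ^ p))\<bar> \<le> C * a powr e * \<bar>v\<bar> ^ Suc n"
    using powr_mult_one_plus_taylor_bound by blast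
  have "\<bar>(t - x) powr e - (\<Sum>p\<le>n. (e gchoose p) * (- x) ^ p * t powr (e - p))\<bar>
      \<le> C * B ^ Suc n * t powr (e - n - 1)"
    if t: "2 * B \<le> t" "t > 0" and x: "\<bar>x\<bar> \<le> B" for t x
  proof -
    define v where "v = - x / t"
    have v: "\<bar>v\<bar> \<le> B / t" "\<bar>v\<bar> \<le> 1/2"
      using t x by (auto simp: v_def abs_div divide_right_mono field_simps)
    have "t - x = t * (1 + v)"
      using t by (simp add: v_def field_simps)
    moreover have "(\<Sum>p\<le>n. (e gchoose p) * (- x) ^ p * t powr (e - p)) = (\<Sum>p\<le>n. (e gchoose p) * (t powr e * v ^ p))"
      using powr_mult_divide_power[OF t(2), of e "- x", folded v_def] by (simp add: mult.assoc)
    ultimately have "\<bar>(t - x) powr e - (\<Sum>p\<le>n. (e gchoose p) * (- x) ^ p * t powr (e - p))\<bar>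
        \<le> C * t powr e * \<bar>v\<bar> ^ Suc n"
      using C[OF t(2) v(2)] by simp
    also have "\<dots> \<le> C * t powr e * (B / t) ^ Suc n"
      using v \<open>C \<ge> 0\<close> by (intro mult_left_mono power_mono) auto
    also have "\<dots> = C * (t powr e * (B / t) ^ Suc n)"
      by (simp only: mult.assoc)
    also have "\<dots> = C * B ^ Suc n * t powr (e - n - 1)"
      unfolding powr_mult_divide_power[OF t(2)] by (simp add: algebra_simps)
    finally show ?thesis .
  qed
  moreover have "C * B ^ Suc n \<ge> 0"
    using \<open>C \<ge> 0\<close> assms by simp
  ultimately show ?thesis by blast
qed

lemma diff_powr_of_nat_eq_sum:
  fixes t x :: real
  assumes "d \<le> n" "t > 0" "x < t"
  shows "(t - x) powr d = (\<Sum>p\<le>n. (real d gchoose p) * (- x) ^ p * t powr (real d - p))"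
proof -
  define v where "v = - x / t"
  have "t - x = t * (1 + v)" and "1 + v > 0"
    using assms by (simp_all add: v_def field_simps)
  then have "(t - x) powr d = t powr d * (\<Sum>p\<le>n. (real d gchoose p) * v ^ p)"
    using one_plus_powr_of_nat_eq_sum[OF assms(1)] by (simp add: powr_mult)
  also have "\<dots> = (\<Sum>p\<le>n. (real d gchoose p) * (- x) ^ p * t powr (real d - p))"
    unfolding sum_distrib_left
  proof (rule sum.cong[OF refl])
    fix p
    show "t powr d * ((real d gchoose p) * v ^ p) = (real d gchoose p) * (- x) ^ p * t powr (real d - p)"
      by (simp only: mult.left_commute[of "t powr d"] mult.assoc
          powr_mult_divide_power[OF assms(2), of d "- x" p, folded v_def])
  qed
  finally show ?thesis .
qed

lemma sum_squares_powr_expansion: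
  fixes s c :: real
  shows "\<exists>C. \<forall>u. u > 0 \<longrightarrow> 2 * \<bar>c\<bar> \<le> u \<longrightarrow>
     \<bar>(u\<^sup>2 + c\<^sup>2) powr s - (\<Sum>i\<le>J. (s gchoose i) * c ^ (2 * i) * u powr (2 * s - 2 * real i))\<bar>
       \<le> C * u powr (2 * s - 2 * real (Suc J))"
proof -
  obtain C where "C \<ge> 0" and C: "\<And>a v. a > 0 \<Longrightarrow> \<bar>v\<bar> \<le> 1/2 \<Longrightarrow>
      \<bar>(a * (1 + v)) powr s - (\<Sum>i\<le>J. (s gchoose i) * (a powr s * v ^ i))\<bar> \<le> C * a powr s * \<bar>v\<bar> ^ Suc J"
    using powr_mult_one_plus_taylor_bound by blast
  have "\<bar>(u\<^sup>2 + c\<^sup>2) powr s - (\<Sum>i\<le>J. (s gchoose i) * c ^ (2 * i) * u powr (2 * s - 2 * real i))\<bar>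
      \<le> C * c ^ (2 * Suc J) * u powr (2 * s - 2 * real (Suc J))"
    if u: "u > 0" "2 * \<bar>c\<bar> \<le> u" for u
  proof -
    define v where "v = c\<^sup>2 / u\<^sup>2"
    have u2: "u\<^sup>2 > 0"
      using u by simp
    have v_nonneg: "v \<ge> 0"
      by (simp add: v_def)
    have "u powr 2 = u\<^sup>2"
      using u(1) powr_realpow[of u 2] by simp
    then have square_powr: "(u\<^sup>2) powr r = u powr (2 * r)" for r
      by (metis powr_powr)
    have rescale: "(u\<^sup>2) powr s * v ^ i = c ^ (2 * i) * u powr (2 * s - 2 * real i)" for i
      using powr_mult_divide_power[OF u2, of s "c\<^sup>2" i, folded v_def]
      by (simp add: square_powr right_diff_distrib flip: power_mult)
    have "(2 * \<bar>c\<bar>)\<^sup>2 \<le> u\<^sup>2"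
      using u by (intro power_mono) auto
    then have v: "\<bar>v\<bar> \<le> 1/2"
      using u2 by (simp add: v_def divide_le_eq power_mult_distrib) (use zero_le_power2[of c] in linarith)
    moreover have "u\<^sup>2 + c\<^sup>2 = u\<^sup>2 * (1 + v)"
      using u by (simp add: v_def field_simps)
    ultimately have "\<bar>(u\<^sup>2 + c\<^sup>2) powr s - (\<Sum>i\<le>J. (s gchoose i) * c ^ (2 * i) * u powr (2 * s - 2 * real i))\<bar>
        \<le> C * (u\<^sup>2) powr s * \<bar>v\<bar> ^ Suc J"
      using C[OF u2 v] by (simp add: rescale mult.assoc)
    also have "\<dots> = C * c ^ (2 * Suc J) * u powr (2 * s - 2 * real (Suc J))"
      using abs_of_nonneg[of v] by (simp only: v_nonneg mult.assoc rescale)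
    finally show ?thesis .
  qed
  then show ?thesis by blast
qed

section \<open>Expansion of shifted multiquadrics\<close>

text \<open>
  \<open>mq_weight c k i * u powr mq_exponent k i\<close> are the terms of the expansion of
  \<open>multiquadric c k u\<close> at infinity, and
  \<open>mq_coeff c k J p t\<close> is the coefficient of \<open>x\<^sup>p\<close> obtained by expanding the first \<open>J + 1\<close> terms at
  \<open>u = t - x\<close> in powers of \<open>x\<close>. For \<open>J \<ge> k\<close>, \<open>mq_coeff c k J n t\<close> has exact order
  \<open>t powr (mq_order k n - n)\<close>.
\<close>

definition mq_exponent :: "nat \<Rightarrow> nat \<Rightarrow> real" where
  "mq_exponent k i = 2 * real k - 1 - 2 * real i"

definition mq_weight :: "real \<Rightarrow> nat \<Rightarrow> nat \<Rightarrow> real" where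
  "mq_weight c k i = ((real k - 1/2) gchoose i) * c ^ (2 * i)"

definition mq_coeff :: "real \<Rightarrow> nat \<Rightarrow> nat \<Rightarrow> nat \<Rightarrow> real \<Rightarrow> real" where
  "mq_coeff c k J p t = (\<Sum>i\<le>J. mq_weight c k i *
      (mq_exponent k i gchoose p) * (-1) ^ p * t powr (mq_exponent k i - p))"

definition mq_order :: "nat \<Rightarrow> nat \<Rightarrow> real" where
  "mq_order k n = (if n < 2 * k then 2 * real k - 1 else -1)"

text \<open>
  Exponents above \<open>mq_order k n\<close> are natural numbers below \<open>n\<close>, for which the binomial
  expansion of \<open>(t - x) powr e\<close> in \<open>x\<close> is exact.
\<close>

lemma mq_exponent_cases:
  assumes "k \<ge> 1"
  obtains "mq_exponent k i \<le> mq_order k n"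
  | d where "d < n" "mq_exponent k i = real d"
proof (cases "n < 2 * k \<or> k \<le> i")
  case True
  then show ?thesis using that(1) by (auto simp: mq_exponent_def mq_order_def)
next
  case False
  then have "mq_exponent k i = real (2 * k - 1 - 2 * i)" "2 * k - 1 - 2 * i < n"
    by (auto simp: mq_exponent_def)
  then show ?thesis using that(2) by blast
qed

lemma diff_powr_expansion_le:
  fixes e E B :: real
  assumes "B \<ge> 0" and "e \<le> E \<or> (\<exists>d<n. e = real d)"
  shows "\<exists>C\<ge>0. \<forall>t x. max 1 (2 * B) \<le> t \<longrightarrow> \<bar>x\<bar> \<le> B \<longrightarrow>
     \<bar>(t - x) powr e - (\<Sum>p\<le>n. (e gchoose p) * (- x) ^ p * t powr (e - p))\<bar> \<le> C * t powr (E - n - 1)"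
  using assms(2)
proof
  assume "e \<le> E"
  obtain C where "C \<ge> 0" and C: "\<forall>t x. 2 * B \<le> t \<longrightarrow> t > 0 \<longrightarrow> \<bar>x\<bar> \<le> B \<longrightarrow>
      \<bar>(t - x) powr e - (\<Sum>p\<le>n. (e gchoose p) * (- x) ^ p * t powr (e - p))\<bar> \<le> C * t powr (e - n - 1)"
    using diff_powr_expansion[OF assms(1)] by blast
  have "C * t powr (e - n - 1) \<le> C * t powr (E - n - 1)" if "t \<ge> 1" for t
    using \<open>C \<ge> 0\<close> \<open>e \<le> E\<close> that by (intro mult_left_mono powr_mono) auto
  with C \<open>C \<ge> 0\<close> show ?thesis
    by (meson max.bounded_iff order_trans zero_less_one less_le_trans)
next
  assume "\<exists>d<n. e = real d"
  then obtain d where "d < n" "e = real d" by blast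
  then have "(t - x) powr e = (\<Sum>p\<le>n. (e gchoose p) * (- x) ^ p * t powr (e - p))"
    if "max 1 (2 * B) \<le> t" "\<bar>x\<bar> \<le> B" for t x
    using that diff_powr_of_nat_eq_sum[of d n t x] by auto
  then show ?thesis by (intro exI[of _ 0]) auto
qed

lemma sum_mq_coeff_eq:
  "(\<Sum>p\<le>n. mq_coeff c k J p t * x ^ p) = (\<Sum>i\<le>J. mq_weight c k i *
      (\<Sum>p\<le>n. (mq_exponent k i gchoose p) * (- x) ^ p * t powr (mq_exponent k i - p)))"
  unfolding mq_coeff_def sum_distrib_left sum_distrib_right
  by (subst sum.swap, intro sum.cong refl) (simp add: power_minus[of x] mult_ac)

lemma multiquadric_asymptotic_expansion:
  "\<exists>C. \<forall>u. u > 0 \<longrightarrow> 2 * \<bar>c\<bar> \<le> u \<longrightarrow>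
     \<bar>multiquadric c k u - (\<Sum>i\<le>J. mq_weight c k i * u powr mq_exponent k i)\<bar>
       \<le> C * u powr mq_exponent k (Suc J)"
proof -
  have exponent: "mq_exponent k i = 2 * (real k - 1/2) - 2 * real i" for i
    by (simp add: mq_exponent_def)
  show ?thesis
    unfolding exponent multiquadric_def mq_weight_def by (rule sum_squares_powr_expansion)
qed

lemma mq_weighted_shift_expansion:
  fixes B :: real
  assumes k: "k \<ge> 1" and B: "B \<ge> 0"
  shows "\<exists>C. \<forall>t x. max 1 (2 * B) \<le> t \<longrightarrow> \<bar>x\<bar> \<le> B \<longrightarrow>
     \<bar>(\<Sum>i\<le>J. mq_weight c k i * (t - x) powr mq_exponent k i) - (\<Sum>p\<le>n. mq_coeff c k J p t * x ^ p)\<bar>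
       \<le> C * t powr (mq_order k n - n - 1)"
proof -
  define E where "E = mq_order k n - n - 1"
  define R where "R i t x = (t - x) powr mq_exponent k i -
      (\<Sum>p\<le>n. (mq_exponent k i gchoose p) * (- x) ^ p * t powr (mq_exponent k i - p))" for i t x
  have "\<exists>C\<ge>0. \<forall>t x. max 1 (2 * B) \<le> t \<longrightarrow> \<bar>x\<bar> \<le> B \<longrightarrow> \<bar>R i t x\<bar> \<le> C * t powr E" for i
    unfolding R_def E_def by (rule mq_exponent_cases[OF k, of i n]; rule diff_powr_expansion_le[OF B]) auto
  then have "\<forall>i. \<exists>C. C \<ge> 0 \<and> (\<forall>t x. max 1 (2 * B) \<le> t \<longrightarrow> \<bar>x\<bar> \<le> B \<longrightarrow> \<bar>R i t x\<bar> \<le> C * t powr E)"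
    by blast
  from choice[OF this] obtain C where C: "\<forall>i. C i \<ge> 0 \<and>
      (\<forall>t x. max 1 (2 * B) \<le> t \<longrightarrow> \<bar>x\<bar> \<le> B \<longrightarrow> \<bar>R i t x\<bar> \<le> C i * t powr E)"
    ..
  have "\<bar>(\<Sum>i\<le>J. mq_weight c k i * (t - x) powr mq_exponent k i) - (\<Sum>p\<le>n. mq_coeff c k J p t * x ^ p)\<bar>
      \<le> (\<Sum>i\<le>J. \<bar>mq_weight c k i\<bar> * C i) * t powr E"
    if "max 1 (2 * B) \<le> t" "\<bar>x\<bar> \<le> B" for t x
  proof -
    have "(\<Sum>i\<le>J. mq_weight c k i * (t - x) powr mq_exponent k i) - (\<Sum>p\<le>n. mq_coeff c k J p t * x ^ p)
        = (\<Sum>i\<le>J. mq_weight c k i * R i t x)"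
      unfolding sum_mq_coeff_eq R_def by (simp add: right_diff_distrib sum_subtractf)
    also have "\<bar>\<dots>\<bar> \<le> (\<Sum>i\<le>J. \<bar>mq_weight c k i\<bar> * (C i * t powr E))"
      using C that by (intro order_trans[OF sum_abs sum_mono]) (simp add: abs_mult mult_left_mono)
    finally show ?thesis
      by (simp add: sum_distrib_right mult.assoc)
  qed
  then show ?thesis
    unfolding E_def by blast
qed

lemma multiquadric_shift_expansion:
  fixes c B :: real
  assumes k: "k \<ge> 1" and B: "B \<ge> 0" and J: "k + n \<le> J"
  shows "\<exists>T D. \<forall>t x. T \<le> t \<longrightarrow> \<bar>x\<bar> \<le> B \<longrightarrow>
     \<bar>multiquadric c k (x - t) - (\<Sum>p\<le>n. mq_coeff c k J p t * x ^ p)\<bar> \<le> D * t powr (mq_order k n - n - 1)"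
proof -
  define E where "E = mq_order k n - n - 1"
  define r where "r = mq_exponent k (Suc J)"
  have r: "r < 0" "r \<le> E"
    using k J by (auto simp: r_def E_def mq_exponent_def mq_order_def)
  obtain C0 where C0: "\<forall>u. u > 0 \<longrightarrow> 2 * \<bar>c\<bar> \<le> u \<longrightarrow>
      \<bar>multiquadric c k u - (\<Sum>i\<le>J. mq_weight c k i * u powr mq_exponent k i)\<bar> \<le> C0 * u powr r"
    using multiquadric_asymptotic_expansion unfolding r_def by blast
  obtain C1 where C1: "\<forall>t x. max 1 (2 * B) \<le> t \<longrightarrow> \<bar>x\<bar> \<le> B \<longrightarrow>
      \<bar>(\<Sum>i\<le>J. mq_weight c k i * (t - x) powr mq_exponent k i) - (\<Sum>p\<le>n. mq_coeff c k J p t * x ^ p)\<bar>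
        \<le> C1 * t powr E"
    using mq_weighted_shift_expansion[OF k B] unfolding E_def by blast
  have "\<bar>multiquadric c k (x - t) - (\<Sum>p\<le>n. mq_coeff c k J p t * x ^ p)\<bar>
      \<le> (\<bar>C0\<bar> * 2 powr (- r) + C1) * t powr E"
    if t: "2 * B + 4 * \<bar>c\<bar> + 2 \<le> t" and x: "\<bar>x\<bar> \<le> B" for t x
  proof -
    define u where "u = t - x"
    have t1: "max 1 (2 * B) \<le> t" and u: "u > 0" "2 * \<bar>c\<bar> \<le> u" "t / 2 \<le> u"
      using t x B by (auto simp: u_def)
    have "multiquadric c k (x - t) = multiquadric c k u"
      by (simp add: multiquadric_def u_def power2_commute)
    moreover have "C0 * u powr r \<le> \<bar>C0\<bar> * 2 powr (- r) * t powr E"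
    proof -
      have "u powr r \<le> (t / 2) powr r"
        using u r t1 by (intro powr_mono2') auto
      also have "\<dots> = 2 powr (- r) * t powr r"
        by (simp add: powr_divide powr_minus_divide)
      also have "\<dots> \<le> 2 powr (- r) * t powr E"
        using r t1 by (intro mult_left_mono powr_mono) auto
      finally have "\<bar>C0\<bar> * u powr r \<le> \<bar>C0\<bar> * (2 powr (- r) * t powr E)"
        by (rule mult_left_mono) simp
      then show ?thesis
        using mult_right_mono[OF abs_ge_self[of C0] powr_ge_zero[of u r]] by (simp add: mult.assoc)
    qed
    ultimately show ?thesis
      using C0[rule_format, OF u(1,2)] C1[rule_format, OF t1 x]
      unfolding u_def distrib_right by arith
  qed
  then show ?thesis
    unfolding E_def by blast
qed

lemma gbinomial_half_integer_nonzero: "(real k - 1/2) gchoose i \<noteq> 0"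
proof -
  have "real k - 1/2 - real j \<noteq> 0" for j
  proof
    assume "real k - 1/2 - real j = 0"
    then have "real (2 * k) = real (2 * j + 1)" by simp
    then have "2 * k = 2 * j + 1" by (simp only: of_nat_eq_iff)
    then show False by presburger
  qed
  then show ?thesis
    unfolding gbinomial_prod_rev by auto
qed

lemma mq_exponent_eq_order_iff:
  assumes "k \<ge> 1"
  shows "mq_exponent k i = mq_order k n \<longleftrightarrow> i = (if n < 2 * k then 0 else k)"
  using assms unfolding mq_exponent_def mq_order_def by auto

lemma mq_coeff_term_tendsto:
  assumes "k \<ge> 1"
  shows "((\<lambda>t. mq_weight c k i * (mq_exponent k i gchoose n) * t powr (mq_exponent k i - mq_order k n))
    \<longlongrightarrow> (if mq_exponent k i = mq_order k n then mq_weight c k i * (mq_exponent k i gchoose n) else 0)) at_top"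
proof (rule mq_exponent_cases[OF assms, of i n])
  assume "mq_exponent k i \<le> mq_order k n"
  then consider "mq_exponent k i = mq_order k n" | "mq_exponent k i < mq_order k n"
    by linarith
  then show ?thesis
  proof cases
    case 1
    then show ?thesis
      by (simp add: tendsto_eventually eventually_gt_at_top[of 0] eventually_mono)
  next
    case 2
    then have "((\<lambda>t. t powr (mq_exponent k i - mq_order k n)) \<longlongrightarrow> 0) at_top"
      by (intro tendsto_neg_powr filterlim_ident) auto
    with 2 show ?thesis
      using tendsto_mult_right_zero by fastforce
  qed
next
  fix d assume "d < n" "mq_exponent k i = real d"
  then have "mq_exponent k i gchoose n = 0"
    by (simp add: binomial_gbinomial[symmetric])
  then show ?thesis
    by (simp only: mult_zero_right mult_zero_left if_cancel tendsto_const)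
qed

lemma mq_leading_term_nonzero:
  assumes "c \<noteq> 0" "k \<ge> 1" and "mq_exponent k i = mq_order k n"
  shows "mq_weight c k i * (mq_exponent k i gchoose n) \<noteq> 0"
proof -
  have "mq_exponent k i gchoose n \<noteq> 0"
  proof (cases "n < 2 * k")
    case True
    then have "mq_exponent k i = real (2 * k - 1)" "n \<le> 2 * k - 1"
      using assms by (auto simp: mq_order_def)
    then show ?thesis
      by (simp add: binomial_gbinomial[symmetric])
  next
    case False
    then have "mq_exponent k i = -1"
      using assms by (simp add: mq_order_def)
    moreover have "(-1::real) gchoose n = (-1) ^ n"
      using gbinomial_minus[of "1::real" n] by (simp add: binomial_gbinomial[symmetric])
    ultimately show ?thesis by simp
  qed
  then show ?thesis
    using assms(1) gbinomial_half_integer_nonzero by (simp add: mq_weight_def)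
qed

lemma mq_coeff_leading_asymptotics:
  assumes c: "c \<noteq> 0" and k: "k \<ge> 1" "k \<le> J"
  shows "\<exists>\<kappa>. \<kappa> \<noteq> 0 \<and> ((\<lambda>t. mq_coeff c k J n t / t powr (mq_order k n - n)) \<longlongrightarrow> \<kappa>) at_top"
proof -
  define E where "E = mq_order k n"
  define i0 where "i0 = (if n < 2 * k then 0 else k)"
  define a where "a i = mq_weight c k i * (mq_exponent k i gchoose n)" for i
  have exponent_eq: "mq_exponent k i = E \<longleftrightarrow> i = i0" for i
    using mq_exponent_eq_order_iff[OF k(1)] by (simp add: E_def i0_def)
  have "((\<lambda>t. a i * t powr (mq_exponent k i - E)) \<longlongrightarrow> (if i = i0 then a i else 0)) at_top" for i
    using mq_coeff_term_tendsto[OF k(1), of c i n] unfolding exponent_eq[of i, unfolded E_def] a_def E_def .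
  then have "((\<lambda>t. \<Sum>i\<le>J. a i * t powr (mq_exponent k i - E)) \<longlongrightarrow> (\<Sum>i\<le>J. if i = i0 then a i else 0)) at_top"
    by (rule tendsto_sum)
  moreover have "(\<Sum>i\<le>J. if i = i0 then a i else 0) = a i0"
    using k by (simp add: i0_def)
  ultimately have lim: "((\<lambda>t. (-1) ^ n * (\<Sum>i\<le>J. a i * t powr (mq_exponent k i - E))) \<longlongrightarrow> (-1) ^ n * a i0) at_top"
    by (intro tendsto_mult_left) simp
  have ev: "\<forall>\<^sub>F t in at_top.
      (-1) ^ n * (\<Sum>i\<le>J. a i * t powr (mq_exponent k i - E)) = mq_coeff c k J n t / t powr (E - n)"
    using eventually_gt_at_top[of 0]
  proof eventually_elim
    case (elim t)
    have "t powr (mq_exponent k i - E) = t powr (mq_exponent k i - n) / t powr (E - n)" for i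
      using elim by (simp add: powr_diff[symmetric])
    then show ?case
      unfolding mq_coeff_def sum_divide_distrib sum_distrib_left
      by (intro sum.cong refl) (simp add: a_def)
  qed
  have "(-1) ^ n * a i0 \<noteq> 0"
    using mq_leading_term_nonzero[OF c k(1) exponent_eq[of i0, unfolded E_def, THEN iffD2]]
    by (simp add: a_def)
  with iffD1[OF tendsto_cong[OF ev] lim] show ?thesis
    unfolding E_def by blast
qed

lemma eventually_multiquadric_shift_relative_expansion:
  fixes c B \<epsilon> :: real
  assumes c: "c \<noteq> 0" and k: "k \<ge> 1" and B: "B \<ge> 0" and \<epsilon>: "\<epsilon> > 0"
  shows "\<forall>\<^sub>F t in at_top. \<exists>A. A n \<noteq> 0 \<and>
     (\<forall>x. \<bar>x\<bar> \<le> B \<longrightarrow> \<bar>multiquadric c k (x - t) - (\<Sum>p\<le>n. A p * x ^ p)\<bar> \<le> \<epsilon> * \<bar>A n\<bar>)"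
proof -
  define J where "J = k + n"
  define E where "E = mq_order k n"
  define K where "K t = mq_coeff c k J n t / t powr (E - n)" for t
  obtain T D where expansion: "\<And>t x. T \<le> t \<Longrightarrow> \<bar>x\<bar> \<le> B \<Longrightarrow>
      \<bar>multiquadric c k (x - t) - (\<Sum>p\<le>n. mq_coeff c k J p t * x ^ p)\<bar> \<le> D * t powr (E - n - 1)"
    using multiquadric_shift_expansion[OF k B, of n J c] unfolding J_def E_def by blast
  have "k \<le> J"
    using k by (simp add: J_def)
  then obtain \<kappa> where "\<kappa> \<noteq> 0" and K: "(K \<longlongrightarrow> \<kappa>) at_top"
    using mq_coeff_leading_asymptotics[OF c k] unfolding K_def E_def by blast
  have "((\<lambda>t. D * inverse t / \<bar>K t\<bar>) \<longlongrightarrow> D * 0 / \<bar>\<kappa>\<bar>) at_top"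
    using \<open>\<kappa> \<noteq> 0\<close> by (intro tendsto_intros K tendsto_inverse_0_at_top filterlim_ident) simp
  then have "\<forall>\<^sub>F t in at_top. D * inverse t / \<bar>K t\<bar> < \<epsilon>"
    using \<epsilon> by (intro order_tendstoD(2)) auto
  with tendsto_imp_eventually_ne[OF K \<open>\<kappa> \<noteq> 0\<close>] eventually_ge_at_top[of "max 1 T"]
  show ?thesis
  proof eventually_elim
    case (elim t)
    then have t: "t > 0" "T \<le> t" and "K t \<noteq> 0" and small: "D * inverse t / \<bar>K t\<bar> < \<epsilon>"
      by auto
    have coeff: "mq_coeff c k J n t = K t * t powr (E - n)"
      using t by (simp add: K_def)
    have "t powr (E - n - 1) = t powr (E - n) / t"
      using t by (simp add: powr_diff)
    then have "D * t powr (E - n - 1) = D * inverse t / \<bar>K t\<bar> * \<bar>mq_coeff c k J n t\<bar>"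
      using t \<open>K t \<noteq> 0\<close> unfolding coeff by (simp add: abs_mult field_simps)
    also have "\<dots> \<le> \<epsilon> * \<bar>mq_coeff c k J n t\<bar>"
      using small by (intro mult_right_mono) auto
    finally have "\<forall>x. \<bar>x\<bar> \<le> B \<longrightarrow> \<bar>multiquadric c k (x - t) - (\<Sum>p\<le>n. mq_coeff c k J p t * x ^ p)\<bar>
        \<le> \<epsilon> * \<bar>mq_coeff c k J n t\<bar>"
      using expansion[OF t(2)] by fastforce
    moreover have "mq_coeff c k J n t \<noteq> 0"
      using t \<open>K t \<noteq> 0\<close> by (simp add: coeff)
    ultimately show ?case
      by (intro exI[of _ "\<lambda>p. mq_coeff c k J p t"]) simp
  qed
qed

lemma multiquadric_shifts_approximate_monomials:
  fixes c a b :: real and xs :: "int \<Rightarrow> real"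
  assumes c: "c \<noteq> 0" and k: "k \<ge> 1" and xs: "filterlim (\<lambda>j::nat. xs (int j)) at_top sequentially"
  shows "uniformly_approximable {a..b} (\<lambda>j x. multiquadric c k (x - xs (int j))) (\<lambda>x. x ^ n)"
proof (induction n rule: less_induct)
  case (less n)
  show ?case
  proof (rule uniformly_approximable_monomial_step)
    fix \<epsilon> :: real assume "\<epsilon> > 0"
    define B where "B = \<bar>a\<bar> + \<bar>b\<bar>"
    have "\<forall>\<^sub>F j in sequentially. \<exists>A. A n \<noteq> 0 \<and> (\<forall>x. \<bar>x\<bar> \<le> B \<longrightarrow>
        \<bar>multiquadric c k (x - xs (int j)) - (\<Sum>p\<le>n. A p * x ^ p)\<bar> \<le> \<epsilon> * \<bar>A n\<bar>)"
      using eventually_compose_filterlim[OF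
          eventually_multiquadric_shift_relative_expansion[OF c k _ \<open>\<epsilon> > 0\<close>, of B n] xs]
      by (simp add: B_def)
    then have "\<forall>\<^sub>F j in sequentially. j \<ge> 1 \<and> (\<exists>A. A n \<noteq> 0 \<and> (\<forall>x. \<bar>x\<bar> \<le> B \<longrightarrow>
        \<bar>multiquadric c k (x - xs (int j)) - (\<Sum>p\<le>n. A p * x ^ p)\<bar> \<le> \<epsilon> * \<bar>A n\<bar>))"
      using eventually_ge_at_top[of "1::nat"] by eventually_elim blast
    then obtain j where "j \<ge> 1 \<and> (\<exists>A. A n \<noteq> 0 \<and> (\<forall>x. \<bar>x\<bar> \<le> B \<longrightarrow>
        \<bar>multiquadric c k (x - xs (int j)) - (\<Sum>p\<le>n. A p * x ^ p)\<bar> \<le> \<epsilon> * \<bar>A n\<bar>))"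
      unfolding eventually_sequentially by blast
    moreover have "\<bar>x\<bar> \<le> B" if "x \<in> {a..b}" for x
      using that by (auto simp: B_def)
    ultimately show "\<exists>j\<ge>1. \<exists>A. A n \<noteq> 0 \<and> (\<forall>x\<in>{a..b}.
        \<bar>multiquadric c k (x - xs (int j)) - (\<Sum>p\<le>n. A p * x ^ p)\<bar> \<le> \<epsilon> * \<bar>A n\<bar>)"
      by blast
  qed (rule less)
qed

theorem theorem3p1:
  fixes c :: real and k :: nat and xs :: "int \<Rightarrow> real"
    and f :: "real \<Rightarrow> real" and a b \<epsilon> :: real
  assumes "c > 0" and "k \<ge> 1"
    and "scattered xs"
    and "continuous_on {a..b} f"
    and "\<epsilon> > 0"
  shows "\<exists>(N::nat) (coef::nat \<Rightarrow> real).
           \<forall>x\<in>{a..b}. \<bar>f x - (\<Sum>j=1..N. coef j * multiquadric c k (x - xs (int j)))\<bar> < \<epsilon>"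
proof -
  have "filterlim xs at_top at_top"
    using assms(3) unfolding scattered_def by blast
  then have "filterlim (\<lambda>j::nat. xs (int j)) at_top sequentially"
    using filterlim_compose filterlim_int_sequentially by blast
  with assms(1,2) have "\<And>n. uniformly_approximable {a..b} (\<lambda>j x. multiquadric c k (x - xs (int j))) (\<lambda>x. x ^ n)"
    by (intro multiquadric_shifts_approximate_monomials) auto
  from uniformly_approximable_continuous[OF this assms(4)] assms(5) show ?thesis
    unfolding uniformly_approximable_def by blast
qed

end
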